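(* Let $\mathcal{X} \subseteq \mathbb{R}^m$ be countable, let $\Theta = \{\theta_1,\dots,\theta_C\}$ with $C \ge 2$, let $p(\cdot\mid\theta_i)$, $i \in [C]$, be probability mass functions on $\mathcal{X}$, let $\pi = (\pi_1,\dots,\pi_C)$ be a prior probability vector, let $\mathcal{Q}$ be a subset of the $C$-dimensional probability simplex, and fix an observation $x \in \mathcal{X}$. Suppose that for every $i \in [C]$ we have $N_i$ i.i.d. samples $\widehat x_{ij}$, $j \in [N_i]$, from $p(\cdot\mid\theta_i)$, and let $\widehat\nu_i^{N_i} = N_i^{-1}\sum_{j=1}^{N_i} \delta_{\widehat x_{ij}}$ be the empirical distribution. For $\varepsilon_i > 0$ let $\mathbb{B}_i^{N_i} = \mathbb{B}_{\mathrm{KL}}(\widehat\nu_i^{N_i},\varepsilon_i) = \{\nu \in \mathcal{M}(\mathcal{X}) : \mathrm{KL}(\widehat\nu_i^{N_i}\parallel\nu) \le \varepsilon_i\}$. Define $$\mathcal{J}^{\mathrm{true}} = \min_{q \in \mathcal{Q}} \sum_{i=1}^C q_i(\log q_i - \log\pi_i) - \sum_{i=1}^C q_i \log p(x\mid\theta_i),$$ $$\widehat{\mathcal{J}}_{\mathbb{B}^N} = \min_{q \in \mathcal{Q}} \sum_{i=1}^C q_i(\log q_i - \log\pi_i) - \sum_{i=1}^C q_i \log\Big(\sup_{\nu_i \in \mathbb{B}_i^{N_i}} \nu_i(x)\Big),$$ and set $n = \min\{N_1,\dots,N_C\}$. Then $$\limsup_{n\to\infty} \frac1n \log \mathbb{P}^\infty\big(\mathcal{J}^{\mathrm{true}}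 < \widehat{\mathcal{J}}_{\mathbb{B}^N}\big) \le -\min_{i \in [C]} \varepsilon_i < 0.$$
   Context: $\mathcal{M}(\mathcal{X})$ is the set of probability mass functions on $\mathcal{X}$; $\delta_z$ is the Dirac measure at $z$; $[C] = \{1,\dots,C\}$. For $\nu_1 \ll \nu_2$, $\mathrm{KL}(\nu_1\parallel\nu_2) = \sum_{z\in\mathcal{X}} f(\nu_1(z)/\nu_2(z))\nu_2(z)$ with $f(t) = t\log t - t + 1$. $\mathbb{P}^\infty$ denotes the probability with respect to the (infinite) i.i.d. sampling of the training data. *)

theory Defs
  imports "HOL-Probability.Probability"
begin

text \<open>f(t) = t log t - t + 1 (with 0 log 0 = 0).\<close>
definition kl_f :: "real \<Rightarrow> real" where
  "kl_f t = t * ln t - t + 1"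

definition KL :: "'x set \<Rightarrow> 'x pmf \<Rightarrow> 'x pmf \<Rightarrow> ennreal" where
  "KL X nu1 nu2 =
     (if (\<forall>z\<in>X. pmf nu2 z = 0 \<longrightarrow> pmf nu1 z = 0)
      then (\<Sum>\<^sub>\<infinity>z\<in>X. ennreal (kl_f (pmf nu1 z / pmf nu2 z) * pmf nu2 z))
      else \<infinity>)"

definition KL_ball :: "'x set \<Rightarrow> 'x pmf \<Rightarrow> real \<Rightarrow> 'x pmf set" where
  "KL_ball X nuhat eps = {nu. set_pmf nu \<subseteq> X \<and> KL X nuhat nu \<le> ennreal eps}"

definition empirical :: "nat \<Rightarrow> (nat \<Rightarrow> 'x) \<Rightarrow> 'x pmf" where
  "empirical N s = map_pmf s (pmf_of_set {..<N})"

definition elog :: "real \<Rightarrow> ereal" where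
  "elog t = (if t \<le> 0 then -\<infinity> else ereal (ln t))"

text \<open>min over q in Q of sum_i q_i (log q_i - log pi_i) - sum_i q_i log w_i,
  in extended reals with 0 log 0 = 0 and 0 * infinity = 0.\<close>
definition Jobj :: "nat \<Rightarrow> (nat \<Rightarrow> real) set \<Rightarrow> (nat \<Rightarrow> real) \<Rightarrow> (nat \<Rightarrow> real) \<Rightarrow> ereal" where
  "Jobj C Q prior w = (INF q\<in>Q. \<Sum>i\<in>{1..C}.
      ereal (q i * ln (q i)) - ereal (q i) * elog (prior i) - ereal (q i) * elog (w i))"

definition sample_pmf :: "nat \<Rightarrow> (nat \<Rightarrow> nat) \<Rightarrow> (nat \<Rightarrow> 'x pmf) \<Rightarrow> 'x \<Rightarrow> (nat \<Rightarrow> nat \<Rightarrow> 'x) pmf" where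
  "sample_pmf C N p dflt =
     Pi_pmf {1..C} (\<lambda>_. dflt) (\<lambda>i. Pi_pmf {..<N i} dflt (\<lambda>_. p i))"

end

theory Submission
  imports Defs "HOL-Real_Asymp.Real_Asymp"
begin

text \<open>Since \<open>Jobj\<close> is antitone in the likelihood vector, the event
  \<open>J_true < J_hat\<close> forces some class \<open>i\<close> whose KL ball does not reach \<open>p_i(x)\<close> at \<open>x\<close>.
  The ball around an empirical distribution \<open>q\<close> contains the distribution that puts
  mass \<open>b\<close> on \<open>x\<close> and rescales \<open>q\<close> elsewhere; its divergence from \<open>q\<close> is the binary
  divergence \<open>kl(q(x) \<parallel> b)\<close>. So class \<open>i\<close> can only fail if the empirical frequency of
  \<open>x\<close> lies below \<open>p_i(x)\<close> at binary divergence more than \<open>\<epsilon>_i\<close>. That frequency is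
  binomial, and the method of types bounds this probability by \<open>(N_i+1) e^(-N_i \<epsilon>_i)\<close>.
  A union bound over the classes, together with \<open>(m+1) e^(-m \<epsilon>)\<close> being eventually
  decreasing in \<open>m\<close>, yields the exponential rate \<open>min_i \<epsilon>_i\<close>.\<close>

lemma kl_f_nonneg:
  assumes "t \<ge> 0"
  shows "kl_f t \<ge> 0"
proof (cases "t = 0")
  case True
  then show ?thesis by (simp add: kl_f_def)
next
  case False
  with assms have t: "t > 0" by simp
  have "- ln t \<le> 1 / t - 1"
    using ln_le_minus_one[of "1 / t"] t by (simp add: ln_div)
  then have "t * (- ln t) \<le> t * (1 / t - 1)"
    using t by (intro mult_left_mono) auto
  then show ?thesis
    using t by (simp add: kl_f_def algebra_simps)
qed

lemma KL_self [simp]: "KL X p p = 0"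
proof -
  have "ennreal (kl_f (pmf p z / pmf p z) * pmf p z) = 0" for z
    by (cases "pmf p z = 0") (auto simp: kl_f_def)
  then show ?thesis
    unfolding KL_def by simp
qed

lemma infsum_ennreal_scaled_pmf:
  assumes "c \<ge> 0"
  shows "(\<Sum>\<^sub>\<infinity>z\<in>A. ennreal (c * pmf q z)) = ennreal (c * measure q A)"
proof -
  have "pmf q summable_on A"
    by (rule Infinite_Sum.abs_summable_summable)
       (use abs_summable_equivalent pmf_abs_summable in blast)
  then have "(\<lambda>z. c * pmf q z) summable_on A"
    by (rule summable_on_cmult_right)
  then have "infsum (ennreal \<circ> (\<lambda>z. c * pmf q z)) A = ennreal (infsum (\<lambda>z. c * pmf q z) A)"
    using assms by (intro infsum_comm_additive_general) (auto simp: sum_ennreal intro!: continuous_intros)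
  also have "infsum (\<lambda>z. c * pmf q z) A = c * measure q A"
    by (simp add: infsum_cmult_right' measure_pmf_conv_infsetsum infsetsum_infsum pmf_abs_summable)
  finally show ?thesis
    by (simp add: o_def)
qed

lemma measure_pmf_neq: "measure_pmf.prob q {z. z \<noteq> x} = 1 - pmf q x"
  using measure_pmf.prob_compl[of "{x}" q]
  by (simp add: measure_pmf_single Compl_eq_Diff_UNIV[symmetric] Compl_eq)

definition kl_bernoulli :: "real \<Rightarrow> real \<Rightarrow> real" where
  "kl_bernoulli a b = a * ln (a / b) + (1 - a) * ln ((1 - a) / (1 - b))"

lemma kl_f_scaled:
  assumes "0 < c"
  shows "kl_f (u / c) * c = u * ln (u / c) - u + c"
  using assms by (simp add: kl_f_def field_simps)

lemma kl_bernoulli_eq_kl_f: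
  assumes "0 < b" "b < 1"
  shows "kl_bernoulli a b = kl_f (a / b) * b + kl_f ((1 - a) / (1 - b)) * (1 - b)"
  using assms by (simp add: kl_f_scaled kl_bernoulli_def)

definition rescale_at :: "'a pmf \<Rightarrow> 'a \<Rightarrow> real \<Rightarrow> 'a pmf" where
  "rescale_at q x b =
     bind_pmf (bernoulli_pmf b) (\<lambda>c. if c then return_pmf x else cond_pmf q {z. z \<noteq> x})"

lemma pmf_rescale_at:
  assumes "pmf q x < 1" and "0 \<le> b" "b \<le> 1"
  shows "pmf (rescale_at q x b) z = (if z = x then b else (1 - b) * pmf q z / (1 - pmf q x))"
proof -
  have "set_pmf q \<inter> {z. z \<noteq> x} \<noteq> {}"
    using assms(1) measure_pmf_zero_iff[of q "{z. z \<noteq> x}"] by (auto simp: measure_pmf_neq)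
  then have "pmf (cond_pmf q {z. z \<noteq> x}) z = (if z \<noteq> x then pmf q z / (1 - pmf q x) else 0)"
    by (simp add: pmf_cond measure_pmf_neq)
  then show ?thesis
    using assms unfolding rescale_at_def pmf_bind
    by (subst integral_bernoulli_pmf) (auto simp: pmf_return)
qed

lemma set_pmf_rescale_at:
  assumes "pmf q x < 1" and "0 \<le> b" "b \<le> 1"
  shows "set_pmf (rescale_at q x b) \<subseteq> insert x (set_pmf q)"
  using assms by (auto simp: set_pmf_iff pmf_rescale_at split: if_splits)

lemma KL_rescale_at:
  assumes "set_pmf q \<subseteq> X" "x \<in> X" and "pmf q x < 1" and "0 < b" "b < 1"
  shows "KL X q (rescale_at q x b) = ennreal (kl_bernoulli (pmf q x) b)"
proof -
  define a where "a = pmf q x"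
  define \<nu> where "\<nu> = rescale_at q x b"
  define r where "r = (1 - a) / (1 - b)"
  define c where "c = kl_f r * (1 - b) / (1 - a)"
  have a: "0 \<le> a" "a < 1"
    using assms(3) by (auto simp: a_def)
  have pmf_\<nu>: "pmf \<nu> z = (if z = x then b else (1 - b) * pmf q z / (1 - a))" for z
    using assms(3-5) by (simp add: \<nu>_def a_def pmf_rescale_at)
  have c: "c \<ge> 0"
    using kl_f_nonneg[of r] a assms(5) by (simp add: c_def r_def)
  have abs_cont: "\<forall>z\<in>X. pmf \<nu> z = 0 \<longrightarrow> pmf q z = 0"
    using a assms(4,5) by (auto simp: pmf_\<nu> split: if_splits)
  \<comment> \<open>Off \<open>x\<close> the ratio \<open>q / \<nu>\<close> is the constant \<open>r\<close>, so these terms add up to \<open>c (1 - a)\<close>.\<close>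
  have off_x: "ennreal (kl_f (pmf q z / pmf \<nu> z) * pmf \<nu> z) = ennreal (c * pmf q z)"
    if "z \<noteq> x" for z
  proof (cases "pmf q z = 0")
    case False
    then have "pmf q z / pmf \<nu> z = r" and "kl_f r * pmf \<nu> z = c * pmf q z"
      using that a assms(5) by (simp_all add: pmf_\<nu> r_def c_def field_simps)
    then show ?thesis by simp
  qed (use that in \<open>simp add: pmf_\<nu>\<close>)
  have "measure q (X - {x}) = measure q {z. z \<noteq> x}"
    using assms(1) by (intro measure_eq_AE) (auto intro!: AE_pmfI)
  then have mass_off_x: "measure q (X - {x}) = 1 - a"
    by (simp add: a_def measure_pmf_neq)
  have "KL X q \<nu> = (\<Sum>\<^sub>\<infinity>z\<in>insert x (X - {x}). ennreal (kl_f (pmf q z / pmf \<nu> z) * pmf \<nu> z))"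
    unfolding KL_def using abs_cont assms(2) by (simp add: insert_absorb)
  also have "\<dots> = ennreal (kl_f (pmf q x / pmf \<nu> x) * pmf \<nu> x)
      + (\<Sum>\<^sub>\<infinity>z\<in>X - {x}. ennreal (kl_f (pmf q z / pmf \<nu> z) * pmf \<nu> z))"
    by (rule infsum_insert) (auto intro: nonneg_summable_on_complete)
  also have "\<dots> = ennreal (kl_f (a / b) * b) + (\<Sum>\<^sub>\<infinity>z\<in>X - {x}. ennreal (c * pmf q z))"
    by (intro arg_cong2[where f = "(+)"] infsum_cong off_x) (simp_all add: pmf_\<nu> a_def)
  also have "\<dots> = ennreal (kl_f (a / b) * b + c * (1 - a))"
    using kl_f_nonneg[of "a / b"] a assms(4) c
    by (simp add: infsum_ennreal_scaled_pmf mass_off_x ennreal_plus)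
  also have "kl_f (a / b) * b + c * (1 - a) = kl_bernoulli a b"
    using a assms(4,5) by (simp add: kl_bernoulli_eq_kl_f c_def r_def)
  finally show ?thesis
    by (simp add: \<nu>_def a_def)
qed

lemma Sup_pmf_KL_ball_ge:
  assumes "set_pmf q \<subseteq> X" "x \<in> X"
    and "b \<le> pmf q x \<or> (b < 1 \<and> kl_bernoulli (pmf q x) b \<le> eps)"
  shows "b \<le> Sup ((\<lambda>\<nu>. pmf \<nu> x) ` KL_ball X q eps)"
proof -
  have "\<exists>\<nu>\<in>KL_ball X q eps. b \<le> pmf \<nu> x"
  proof (cases "b \<le> pmf q x")
    case True
    moreover have "q \<in> KL_ball X q eps"
      using assms(1) by (simp add: KL_ball_def)
    ultimately show ?thesis by blast
  next
    case False
    with assms(3) have b: "pmf q x < b" "b < 1" "kl_bernoulli (pmf q x) b \<le> eps"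
      by auto
    have "0 < b"
      using b(1) pmf_nonneg[of q x] by linarith
    have "pmf q x < 1"
      using b by linarith
    then have "set_pmf (rescale_at q x b) \<subseteq> X"
      using set_pmf_rescale_at[of q x b] \<open>0 < b\<close> b(2) assms(1,2) by auto
    moreover have "KL X q (rescale_at q x b) \<le> ennreal eps"
      using KL_rescale_at[OF assms(1,2) \<open>pmf q x < 1\<close> \<open>0 < b\<close> b(2)] b(3)
      by (simp add: ennreal_leI)
    moreover have "pmf (rescale_at q x b) x = b"
      using \<open>pmf q x < 1\<close> \<open>0 < b\<close> b(2) by (simp add: pmf_rescale_at)
    ultimately show ?thesis
      unfolding KL_ball_def by (metis (mono_tags, lifting) mem_Collect_eq order.refl)
  qed
  moreover have "bdd_above ((\<lambda>\<nu>. pmf \<nu> x) ` KL_ball X q eps)"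
    by (rule bdd_aboveI[of _ 1]) (auto simp: pmf_le_1)
  ultimately show ?thesis
    by (metis cSup_upper2 imageI)
qed

lemma elog_mono: "s \<le> t \<Longrightarrow> elog s \<le> elog t"
  by (auto simp: elog_def)

lemma Jobj_antimono:
  assumes "\<And>q i. q \<in> Q \<Longrightarrow> i \<in> {1..C} \<Longrightarrow> 0 \<le> q i"
    and "\<And>i. i \<in> {1..C} \<Longrightarrow> w i \<le> w' i"
  shows "Jobj C Q prior w' \<le> Jobj C Q prior w"
  unfolding Jobj_def
proof (rule INF_superset_mono[OF order.refl], rule sum_mono)
  fix q i assume "q \<in> Q" "i \<in> {1..C}"
  then show "ereal (q i * ln (q i)) - ereal (q i) * elog (prior i) - ereal (q i) * elog (w' i)
      \<le> ereal (q i * ln (q i)) - ereal (q i) * elog (prior i) - ereal (q i) * elog (w i)"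
    using assms by (intro ereal_minus_mono order.refl ereal_mult_left_mono elog_mono) auto
qed

lemma power_mult_exp_ln_ratio:
  fixes t b :: real
  assumes "0 \<le> t" "0 < b" "t = 0 \<Longrightarrow> k = 0"
  shows "t ^ k * exp (- real k * ln (t / b)) = b ^ k"
proof (cases "k = 0")
  case False
  with assms have t: "t > 0"
    by fastforce
  have "exp (- real k * ln (t / b)) = exp (- ln (t / b)) ^ k"
    by (simp flip: exp_of_nat_mult)
  also have "exp (- ln (t / b)) = b / t"
    using t assms(2) by (simp add: exp_minus)
  finally show ?thesis
    using t by (simp add: power_divide)
qed simp

lemma pmf_binomial_le_exp_kl_bernoulli:
  assumes "0 < b" "b < 1" "k \<le> N" "N > 0"
  shows "pmf (binomial_pmf N b) k \<le> exp (- real N * kl_bernoulli (real k / real N) b)"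
proof -
  define t where "t = real k / real N"
  have t: "0 \<le> t" "t \<le> 1"
    using assms(3,4) by (auto simp: t_def)
  have Nt: "real N * t = real k" and Nt': "real N * (1 - t) = real (N - k)"
    using assms(3,4) by (simp_all add: t_def algebra_simps of_nat_diff)
  have "exp (- real N * kl_bernoulli t b)
      = exp (- real k * ln (t / b)) * exp (- real (N - k) * ln ((1 - t) / (1 - b)))"
    by (simp add: kl_bernoulli_def algebra_simps flip: exp_add Nt Nt')
  moreover have "t ^ k * exp (- real k * ln (t / b)) = b ^ k"
    using t assms(1,4) by (intro power_mult_exp_ln_ratio) (auto simp: t_def)
  moreover have "(1 - t) ^ (N - k) * exp (- real (N - k) * ln ((1 - t) / (1 - b))) = (1 - b) ^ (N - k)"
    using t assms(2) Nt' by (intro power_mult_exp_ln_ratio) auto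
  ultimately have "pmf (binomial_pmf N b) k = pmf (binomial_pmf N t) k * exp (- real N * kl_bernoulli t b)"
    using t assms(1,2) by (simp add: algebra_simps)
  also have "\<dots> \<le> exp (- real N * kl_bernoulli t b)"
    using pmf_le_1 by (intro mult_left_le_one_le) auto
  finally show ?thesis
    by (simp add: t_def)
qed

lemma binomial_lower_tail_le:
  assumes "0 \<le> b" "b \<le> 1" "N > 0"
  shows "measure (binomial_pmf N b)
           {k. real k / real N < b \<and> (b < 1 \<longrightarrow> eps < kl_bernoulli (real k / real N) b)}
         \<le> real (N + 1) * exp (- real N * eps)"
    (is "measure _ ?S \<le> _")
proof -
  have "set_pmf (binomial_pmf N b) \<subseteq> {..N}"
    using assms(1,2) by (auto simp: set_pmf_binomial_eq)
  then have "measure (binomial_pmf N b) ?S \<le> measure (binomial_pmf N b) (?S \<inter> {..N})"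
    by (subst measure_Int_set_pmf[symmetric]) (intro measure_pmf.finite_measure_mono, auto)
  also have "\<dots> = (\<Sum>k\<in>?S \<inter> {..N}. pmf (binomial_pmf N b) k)"
    by (simp add: measure_measure_pmf_finite)
  also have "\<dots> \<le> (\<Sum>k\<in>?S \<inter> {..N}. exp (- real N * eps))"
  proof (rule sum_mono)
    fix k assume k: "k \<in> ?S \<inter> {..N}"
    then have k_lt: "real k / real N < b"
      by simp
    show "pmf (binomial_pmf N b) k \<le> exp (- real N * eps)"
    proof (cases "b < 1")
      case True
      have "0 < b"
        using k_lt divide_nonneg_nonneg[of "real k" "real N"] by linarith
      then have "pmf (binomial_pmf N b) k \<le> exp (- real N * kl_bernoulli (real k / real N) b)"
        using k True assms(3) by (intro pmf_binomial_le_exp_kl_bernoulli) auto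
      also have "\<dots> \<le> exp (- real N * eps)"
        using k True assms(3) by simp
      finally show ?thesis .
    next
      case False
      with assms(2) have "b = 1"
        by simp
      with k_lt assms(3) have "k < N"
        by (simp add: divide_less_eq)
      with \<open>b = 1\<close> show ?thesis
        by (simp add: zero_power)
    qed
  qed
  also have "\<dots> \<le> (\<Sum>k\<le>N. exp (- real N * eps))"
    by (intro sum_mono2) auto
  finally show ?thesis
    by simp
qed

lemma pmf_empirical:
  assumes "N > 0"
  shows "pmf (empirical N s) x = real (card {j\<in>{..<N}. s j = x}) / real N"
proof -
  have "{..<N} \<inter> s -` {x} = {j\<in>{..<N}. s j = x}"
    by auto
  with assms show ?thesis
    unfolding empirical_def pmf_map by (subst measure_pmf_of_set) auto
qed

lemma set_pmf_empirical:
  assumes "N > 0"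
  shows "set_pmf (empirical N s) = s ` {..<N}"
  using assms by (simp add: empirical_def set_pmf_of_set lessThan_empty_iff)

lemma map_pmf_eq_bernoulli: "map_pmf (\<lambda>z. z = x) p = bernoulli_pmf (pmf p x)"
proof (rule pmf_eqI)
  fix c :: bool
  have "(\<lambda>z. z = x) -` {True} = {x}" "(\<lambda>z. z = x) -` {False} = UNIV - {x}"
    by auto
  then show "pmf (map_pmf (\<lambda>z. z = x) p) c = pmf (bernoulli_pmf (pmf p x)) c"
    using measure_pmf.prob_compl[of "{x}" p]
    by (cases c) (simp_all add: pmf_map measure_pmf_single pmf_le_1)
qed

lemma count_Pi_pmf_binomial:
  "map_pmf (\<lambda>s. card {j\<in>{..<N}. s j = x}) (Pi_pmf {..<N} d (\<lambda>_. p)) = binomial_pmf N (pmf p x)"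
proof -
  have "Pi_pmf {..<N} (d = x) (\<lambda>_. bernoulli_pmf (pmf p x))
      = map_pmf (\<lambda>s. (\<lambda>z. z = x) \<circ> s) (Pi_pmf {..<N} d (\<lambda>_. p))"
    by (subst Pi_pmf_map[symmetric]) (auto simp: map_pmf_eq_bernoulli)
  moreover have "binomial_pmf N (pmf p x)
      = map_pmf (\<lambda>f. card {j\<in>{..<N}. f j}) (Pi_pmf {..<N} (d = x) (\<lambda>_. bernoulli_pmf (pmf p x)))"
    by (rule binomial_pmf_altdef') (auto simp: pmf_le_1)
  ultimately show ?thesis
    by (simp add: pmf.map_comp o_def)
qed

lemma empirical_lower_tail_le:
  assumes "N > 0"
  shows "measure (Pi_pmf {..<N} d (\<lambda>_. p))
           {s. pmf (empirical N s) x < pmf p x \<and>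
               (pmf p x < 1 \<longrightarrow> eps < kl_bernoulli (pmf (empirical N s) x) (pmf p x))}
         \<le> real (N + 1) * exp (- real N * eps)"
proof -
  let ?count = "\<lambda>s. card {j\<in>{..<N}. s j = x}"
  let ?S = "{k. real k / real N < pmf p x \<and> (pmf p x < 1 \<longrightarrow> eps < kl_bernoulli (real k / real N) (pmf p x))}"
  have "measure (Pi_pmf {..<N} d (\<lambda>_. p))
          {s. pmf (empirical N s) x < pmf p x \<and>
              (pmf p x < 1 \<longrightarrow> eps < kl_bernoulli (pmf (empirical N s) x) (pmf p x))}
      = measure (map_pmf ?count (Pi_pmf {..<N} d (\<lambda>_. p))) ?S"
    using assms by (simp add: pmf_empirical vimage_def)
  also have "\<dots> = measure (binomial_pmf N (pmf p x)) ?S"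
    by (simp only: count_Pi_pmf_binomial)
  also have "\<dots> \<le> real (N + 1) * exp (- real N * eps)"
    using assms by (intro binomial_lower_tail_le) (auto simp: pmf_le_1)
  finally show ?thesis .
qed

lemma sample_pmf_in_support:
  assumes "\<omega> \<in> set_pmf (sample_pmf C N p d)" "i \<in> {1..C}" "j < N i"
  shows "\<omega> i j \<in> set_pmf (p i)"
  using assms by (auto simp: sample_pmf_def set_Pi_pmf PiE_dflt_def)

lemma prob_Jobj_lt_le:
  assumes sp: "\<And>i. i \<in> {1..C} \<Longrightarrow> set_pmf (p i) \<subseteq> X"
    and Q: "\<And>q i. q \<in> Q \<Longrightarrow> i \<in> {1..C} \<Longrightarrow> 0 \<le> q i"
    and x: "x \<in> X"
    and N: "\<And>i. i \<in> {1..C} \<Longrightarrow> N i > 0"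
  shows "measure_pmf.prob (sample_pmf C N p d)
           {\<omega>. Jobj C Q prior (\<lambda>i. pmf (p i) x)
                < Jobj C Q prior (\<lambda>i. Sup ((\<lambda>\<nu>. pmf \<nu> x) `
                      KL_ball X (empirical (N i) (\<omega> i)) (\<epsilon> i)))}
         \<le> (\<Sum>i\<in>{1..C}. real (N i + 1) * exp (- real (N i) * \<epsilon> i))"
    (is "measure (measure_pmf ?M) ?E \<le> _")
proof -
  define deficit where "deficit i s \<longleftrightarrow> pmf (empirical (N i) s) x < pmf (p i) x \<and>
      (pmf (p i) x < 1 \<longrightarrow> \<epsilon> i < kl_bernoulli (pmf (empirical (N i) s) x) (pmf (p i) x))" for i s
  have "?E \<inter> set_pmf ?M \<subseteq> (\<Union>i\<in>{1..C}. {\<omega>. deficit i (\<omega> i)})"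
  proof (rule subsetI, rule ccontr)
    fix \<omega> assume \<omega>: "\<omega> \<in> ?E \<inter> set_pmf ?M" "\<omega> \<notin> (\<Union>i\<in>{1..C}. {\<omega>. deficit i (\<omega> i)})"
    have "set_pmf (empirical (N i) (\<omega> i)) \<subseteq> X" if "i \<in> {1..C}" for i
      using that \<omega>(1) sp N sample_pmf_in_support by (fastforce simp: set_pmf_empirical)
    then have "Jobj C Q prior (\<lambda>i. Sup ((\<lambda>\<nu>. pmf \<nu> x) ` KL_ball X (empirical (N i) (\<omega> i)) (\<epsilon> i)))
        \<le> Jobj C Q prior (\<lambda>i. pmf (p i) x)"
      using \<omega>(2) Q x by (intro Jobj_antimono Sup_pmf_KL_ball_ge) (auto simp: deficit_def not_less)
    with \<omega>(1) show False
      by (simp add: not_less[symmetric])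
  qed
  then have "measure ?M ?E \<le> measure ?M (\<Union>i\<in>{1..C}. {\<omega>. deficit i (\<omega> i)})"
    by (subst measure_Int_set_pmf[symmetric]) (intro measure_pmf.finite_measure_mono, auto)
  also have "\<dots> \<le> (\<Sum>i\<in>{1..C}. measure ?M {\<omega>. deficit i (\<omega> i)})"
    by (intro measure_pmf.finite_measure_subadditive_finite) auto
  also have "\<dots> \<le> (\<Sum>i\<in>{1..C}. real (N i + 1) * exp (- real (N i) * \<epsilon> i))"
  proof (rule sum_mono)
    fix i assume i: "i \<in> {1..C}"
    have "measure ?M {\<omega>. deficit i (\<omega> i)} = measure (map_pmf (\<lambda>\<omega>. \<omega> i) ?M) {s. deficit i s}"
      by simp
    also have "map_pmf (\<lambda>\<omega>. \<omega> i) ?M = Pi_pmf {..<N i} d (\<lambda>_. p i)"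
      using i by (simp add: sample_pmf_def Pi_pmf_component)
    also have "measure \<dots> {s. deficit i s} \<le> real (N i + 1) * exp (- real (N i) * \<epsilon> i)"
      unfolding deficit_def using N[OF i] by (rule empirical_lower_tail_le)
    finally show "measure ?M {\<omega>. deficit i (\<omega> i)} \<le> real (N i + 1) * exp (- real (N i) * \<epsilon> i)" .
  qed
  finally show ?thesis .
qed

lemma mult_exp_neg_antimono:
  fixes e m n :: real
  assumes "0 < e" "1 \<le> (n + 1) * e" "n \<le> m"
  shows "(m + 1) * exp (- m * e) \<le> (n + 1) * exp (- n * e)"
proof -
  have "0 < (n + 1) * e"
    using assms(2) by linarith
  then have n: "0 < n + 1"
    using assms(1) by (metis zero_less_mult_pos2)
  have "0 \<le> (m - n) * ((n + 1) * e - 1)"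
    using assms by simp
  then have "m + 1 \<le> (n + 1) * (1 + (m - n) * e)"
    by (simp add: algebra_simps)
  also have "\<dots> \<le> (n + 1) * exp ((m - n) * e)"
    using n by (intro mult_left_mono) auto
  finally have "(m + 1) * exp (- m * e) \<le> (n + 1) * exp ((m - n) * e) * exp (- m * e)"
    by (intro mult_right_mono) auto
  also have "\<dots> = (n + 1) * exp (- n * e)"
    by (simp add: algebra_simps flip: exp_add)
  finally show ?thesis .
qed

lemma sum_rate_le_card_Min:
  fixes N :: "'i \<Rightarrow> nat"
  assumes "finite I" "\<And>i. i \<in> I \<Longrightarrow> e \<le> \<epsilon> i" "0 < e" "1 \<le> (real (Min (N ` I)) + 1) * e"
  shows "(\<Sum>i\<in>I. real (N i + 1) * exp (- real (N i) * \<epsilon> i))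
         \<le> real (card I) * ((real (Min (N ` I)) + 1) * exp (- real (Min (N ` I)) * e))"
proof (rule sum_bounded_above)
  fix i assume i: "i \<in> I"
  have "real (N i) * e \<le> real (N i) * \<epsilon> i"
    using assms(2)[OF i] by (intro mult_left_mono) auto
  then have "real (N i + 1) * exp (- real (N i) * \<epsilon> i) \<le> (real (N i) + 1) * exp (- real (N i) * e)"
    unfolding of_nat_add of_nat_1 by (intro mult_left_mono) auto
  also have "\<dots> \<le> (real (Min (N ` I)) + 1) * exp (- real (Min (N ` I)) * e)"
    using assms i by (intro mult_exp_neg_antimono) auto
  finally show "real (N i + 1) * exp (- real (N i) * \<epsilon> i)
      \<le> (real (Min (N ` I)) + 1) * exp (- real (Min (N ` I)) * e)" .
qed

lemma ereal_log_rate_le: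
  assumes "0 < n" "0 < K" "P \<le> K * ((real n + 1) * exp (- real n * e))"
  shows "ereal (1 / real n) * elog P \<le> ereal (ln (K * (real n + 1)) / real n - e)"
proof (cases "P > 0")
  case True
  then have "ln P \<le> ln (K * ((real n + 1) * exp (- real n * e)))"
    using assms(3) by simp
  also have "\<dots> = ln (K * (real n + 1)) - real n * e"
    using assms(2) by (simp add: ln_mult)
  finally have "ln P / real n \<le> ln (K * (real n + 1)) / real n - e"
    using assms(1) by (simp add: field_simps)
  then show ?thesis
    using True by (simp add: elog_def)
qed (use assms(1) in \<open>simp add: elog_def\<close>)

lemma Limsup_log_prob_le:
  fixes h :: "'a \<Rightarrow> nat"
  assumes "0 < K"
    and "eventually (\<lambda>y. P y \<le> K * ((real (h y) + 1) * exp (- real (h y) * e))) (filtercomap h at_top)"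
  shows "Limsup (filtercomap h at_top) (\<lambda>y. ereal (1 / real (h y)) * elog (P y)) \<le> - ereal e"
proof -
  define rate where "rate n = ln (K * (real n + 1)) / real n - e" for n :: nat
  have "rate \<longlonglongrightarrow> - e"
    using assms(1) unfolding rate_def by real_asymp
  then have lim: "((\<lambda>y. ereal (rate (h y))) \<longlongrightarrow> - ereal e) (filtercomap h at_top)"
    by (intro filterlim_filtercomapI) (simp add: tendsto_ereal)
  have bound: "eventually (\<lambda>y. ereal (1 / real (h y)) * elog (P y) \<le> ereal (rate (h y)))
      (filtercomap h at_top)"
    using assms(2) eventually_filtercomapI[OF eventually_gt_at_top[of 0], of h]
    by eventually_elim (use assms(1) in \<open>auto simp: rate_def intro: ereal_log_rate_le\<close>)
  show ?thesis
    unfolding Limsup_le_iff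
  proof (intro allI impI)
    fix c assume "- ereal e < c"
    with lim have "eventually (\<lambda>y. ereal (rate (h y)) < c) (filtercomap h at_top)"
      by (rule order_tendstoD(2))
    with bound show "eventually (\<lambda>y. c > ereal (1 / real (h y)) * elog (P y)) (filtercomap h at_top)"
      by eventually_elim (rule le_less_trans)
  qed
qed

lemma prob_Jobj_lt_le_exp_Min:
  assumes "\<And>i. i \<in> {1..C} \<Longrightarrow> set_pmf (p i) \<subseteq> X"
    and "\<And>q i. q \<in> Q \<Longrightarrow> i \<in> {1..C} \<Longrightarrow> 0 \<le> q i"
    and "x \<in> X"
    and "\<And>i. i \<in> {1..C} \<Longrightarrow> e \<le> \<epsilon> i" "0 < e"
    and "1 \<le> Min (N ` {1..C})" "1 \<le> (real (Min (N ` {1..C})) + 1) * e"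
  shows "measure_pmf.prob (sample_pmf C N p d)
           {\<omega>. Jobj C Q prior (\<lambda>i. pmf (p i) x)
                < Jobj C Q prior (\<lambda>i. Sup ((\<lambda>\<nu>. pmf \<nu> x) `
                      KL_ball X (empirical (N i) (\<omega> i)) (\<epsilon> i)))}
         \<le> real C * ((real (Min (N ` {1..C})) + 1) * exp (- real (Min (N ` {1..C})) * e))"
proof -
  have "0 < N i" if "i \<in> {1..C}" for i
  proof -
    have "Min (N ` {1..C}) \<le> N i"
      using that by (intro Min_le) auto
    with assms(6) show ?thesis
      by linarith
  qed
  with assms(1-3) have "measure_pmf.prob (sample_pmf C N p d)
           {\<omega>. Jobj C Q prior (\<lambda>i. pmf (p i) x)
                < Jobj C Q prior (\<lambda>i. Sup ((\<lambda>\<nu>. pmf \<nu> x) `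
                      KL_ball X (empirical (N i) (\<omega> i)) (\<epsilon> i)))}
         \<le> (\<Sum>i\<in>{1..C}. real (N i + 1) * exp (- real (N i) * \<epsilon> i))"
    by (rule prob_Jobj_lt_le)
  also have "\<dots> \<le> real (card {1..C}) * ((real (Min (N ` {1..C})) + 1) * exp (- real (Min (N ` {1..C})) * e))"
    using assms(4,5,7) by (intro sum_rate_le_card_Min) auto
  finally show ?thesis
    by simp
qed

theorem mainTheorem8:
  fixes X :: "(real ^ 'm) set"
    and C :: nat
    and p :: "nat \<Rightarrow> (real ^ 'm) pmf"
    and prior :: "nat \<Rightarrow> real"
    and Q :: "(nat \<Rightarrow> real) set"
    and x :: "real ^ 'm"
    and \<epsilon> :: "nat \<Rightarrow> real"
  assumes "countable X"
    and "C \<ge> 2"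
    and "\<And>i. i \<in> {1..C} \<Longrightarrow> set_pmf (p i) \<subseteq> X"
    and "\<And>i. i \<in> {1..C} \<Longrightarrow> prior i \<ge> 0"
    and "(\<Sum>i\<in>{1..C}. prior i) = 1"
    and "\<And>q. q \<in> Q \<Longrightarrow> (\<forall>i\<in>{1..C}. q i \<ge> 0) \<and> (\<Sum>i\<in>{1..C}. q i) = 1"
    and "x \<in> X"
    and "\<And>i. i \<in> {1..C} \<Longrightarrow> \<epsilon> i > 0"
  shows "Limsup (filtercomap (\<lambda>N. Min (N ` {1..C})) at_top)
           (\<lambda>N. ereal (1 / real (Min (N ` {1..C}))) *
                 elog (measure_pmf.prob (sample_pmf C N p x)
                   {\<omega>. Jobj C Q prior (\<lambda>i. pmf (p i) x)
                        < Jobj C Q prior (\<lambda>i. Sup ((\<lambda>\<nu>. pmf \<nu> x) `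
                              KL_ball X (empirical (N i) (\<omega> i)) (\<epsilon> i)))}))
         \<le> - ereal (Min (\<epsilon> ` {1..C}))
       \<and> - Min (\<epsilon> ` {1..C}) < 0"
proof -
  define e where "e = Min (\<epsilon> ` {1..C})"
  have e_le: "\<And>i. i \<in> {1..C} \<Longrightarrow> e \<le> \<epsilon> i"
    by (simp add: e_def)
  have "e \<in> \<epsilon> ` {1..C}"
    unfolding e_def using assms(2) by (intro Min_in) auto
  then have e: "0 < e"
    using assms(8) by auto
  have Q_nonneg: "\<And>q i. q \<in> Q \<Longrightarrow> i \<in> {1..C} \<Longrightarrow> 0 \<le> q i"
    using assms(6) by blast
  let ?n = "\<lambda>N. Min (N ` {1..C})"
  have "eventually (\<lambda>n. 1 \<le> (real n + 1) * e) at_top"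
    using e by real_asymp
  then have large: "eventually (\<lambda>N. 1 \<le> ?n N \<and> 1 \<le> (real (?n N) + 1) * e) (filtercomap ?n at_top)"
    by (intro eventually_filtercomapI eventually_conj eventually_ge_at_top)
  show ?thesis
    unfolding e_def[symmetric]
  proof (intro conjI Limsup_log_prob_le[of "real C"])
    show "0 < real C"
      using assms(2) by simp
    show "- e < 0"
      using e by simp
  qed (rule eventually_mono[OF large], rule prob_Jobj_lt_le_exp_Min;
       use assms(3,7) Q_nonneg e_le e in auto)
qed

end
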